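(* Let $\Delta$ be a simplicial complex on $[n]$ with $I_\Delta\neq 0$, let $k$ be the initial degree of $I_\Delta$, and let $d=(d_1,\dots,d_n)$ with $d_i\ge 2$ for $1\le i\le n$. Then the initial degree of $I_{M(\Delta,d)}$ is $2^{k-1}$.
   Context: A simplicial complex on $[n]$ is a nonempty family of subsets of $[n]$ closed under subsets (not every singleton need be a face); facets are inclusion-maximal faces. $I_\Delta=(\prod_{i\in\sigma}x_i:\sigma\subseteq[n],\sigma\notin\Delta)\subset K[x_1,\dots,x_n]$ is the Stanley–Reisner ideal. The initial degree of a nonzero homogeneous ideal is the smallest degree of a minimal generator. Hierarchical model: $M(\Delta,d)$ is the $0/1$ matrix with columns indexed by cells $c\in\mathcal C=[d_1]\times\cdots\times[d_n]$ and rows indexed by pairs $(F,a)$, $F$ a facet, $a\in\prod_{i\in F}[d_i]$, entry $1$ iff $c|_F=a$. Its toric ideal $I_{M(\Delta,d)}\subset K[p_c:c\in\mathcal C]$ is generated by binomials $p^u-p^v$, $u,v\in\mathbb N^{\mathcal C}$, $Mu=Mv$, and is homogeneous. *)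

theory Defs
  imports Main "HOL-Library.FuncSet" "HOL-Library.Poly_Mapping"
begin

type_synonym ('v, 'k) mpoly = "('v \<Rightarrow>\<^sub>0 nat) \<Rightarrow>\<^sub>0 'k"

definition poly_ring :: "'v set \<Rightarrow> ('v, 'k::zero) mpoly set" where
  "poly_ring V = {p :: ('v, 'k) mpoly. \<forall>m\<in>Poly_Mapping.keys p. Poly_Mapping.keys m \<subseteq> V}"

inductive_set ideal_gen :: "'v set \<Rightarrow> ('v, 'k::comm_ring_1) mpoly set \<Rightarrow> ('v, 'k) mpoly set"
  for V G where
  zero: "0 \<in> ideal_gen V G"
| step: "g \<in> G \<Longrightarrow> r \<in> poly_ring V \<Longrightarrow> f \<in> ideal_gen V G \<Longrightarrow> f + r * g \<in> ideal_gen V G"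

definition monom_deg :: "('v \<Rightarrow>\<^sub>0 nat) \<Rightarrow> nat" where
  "monom_deg m = (\<Sum>v\<in>Poly_Mapping.keys m. Poly_Mapping.lookup m v)"

definition homogeneous_of_deg :: "('v, 'k::zero) mpoly \<Rightarrow> nat \<Rightarrow> bool" where
  "homogeneous_of_deg f k = (\<forall>m\<in>Poly_Mapping.keys f. monom_deg m = k)"

text \<open>Initial degree of a (nonzero homogeneous) ideal: the least degree in which it contains
  a nonzero homogeneous element; this equals the smallest degree of a minimal generator.\<close>
definition initial_degree :: "('v, 'k::zero) mpoly set \<Rightarrow> nat" where
  "initial_degree I = (LEAST k. \<exists>f\<in>I. f \<noteq> 0 \<and> homogeneous_of_deg f k)"

definition simplicial_complex :: "nat \<Rightarrow> nat set set \<Rightarrow> bool" where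
  "simplicial_complex n \<Delta> \<longleftrightarrow> \<Delta> \<noteq> {} \<and> (\<forall>\<sigma>\<in>\<Delta>. \<sigma> \<subseteq> {1..n}) \<and> (\<forall>\<sigma>\<in>\<Delta>. \<forall>\<tau>. \<tau> \<subseteq> \<sigma> \<longrightarrow> \<tau> \<in> \<Delta>)"

definition facets :: "nat set set \<Rightarrow> nat set set" where
  "facets \<Delta> = {F\<in>\<Delta>. \<forall>G\<in>\<Delta>. F \<subseteq> G \<longrightarrow> G = F}"

definition sr_ideal :: "nat \<Rightarrow> nat set set \<Rightarrow> (nat, 'k::comm_ring_1) mpoly set" where
  "sr_ideal n \<Delta> = ideal_gen {1..n}
     {Poly_Mapping.single (\<Sum>i\<in>\<sigma>. Poly_Mapping.single i 1) 1 | \<sigma>. \<sigma> \<subseteq> {1..n} \<and> \<sigma> \<notin> \<Delta>}"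

definition cells :: "nat \<Rightarrow> (nat \<Rightarrow> nat) \<Rightarrow> (nat \<Rightarrow> nat) set" where
  "cells n d = PiE {1..n} (\<lambda>i. {1..d i})"

text \<open>Row (F,a) of M(Delta,d) applied to u in N^C.\<close>
definition model_row :: "nat \<Rightarrow> (nat \<Rightarrow> nat) \<Rightarrow> nat set \<Rightarrow> (nat \<Rightarrow> nat) \<Rightarrow> ((nat \<Rightarrow> nat) \<Rightarrow>\<^sub>0 nat) \<Rightarrow> nat" where
  "model_row n d F a u = (\<Sum>c\<in>{c\<in>cells n d. restrict c F = a}. Poly_Mapping.lookup u c)"

definition same_margins :: "nat \<Rightarrow> (nat \<Rightarrow> nat) \<Rightarrow> nat set set \<Rightarrow> ((nat \<Rightarrow> nat) \<Rightarrow>\<^sub>0 nat) \<Rightarrow> ((nat \<Rightarrow> nat) \<Rightarrow>\<^sub>0 nat) \<Rightarrow> bool" where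
  "same_margins n d \<Delta> u v \<longleftrightarrow>
     (\<forall>F\<in>facets \<Delta>. \<forall>a\<in>PiE F (\<lambda>i. {1..d i}). model_row n d F a u = model_row n d F a v)"

definition hier_ideal :: "nat \<Rightarrow> (nat \<Rightarrow> nat) \<Rightarrow> nat set set \<Rightarrow> (nat \<Rightarrow> nat, 'k::comm_ring_1) mpoly set" where
  "hier_ideal n d \<Delta> = ideal_gen (cells n d)
     {Poly_Mapping.single u 1 - Poly_Mapping.single v 1 | u v.
        Poly_Mapping.keys u \<subseteq> cells n d \<and> Poly_Mapping.keys v \<subseteq> cells n d \<and> same_margins n d \<Delta> u v}"

end

theory Submission
  imports Defs
begin

text \<open>Let \<open>\<sigma>\<close> be a smallest non-face; the Stanley-Reisner ideal starts in degree
  \<open>k = |\<sigma>|\<close>. If \<open>p\<^sup>u - p\<^sup>v\<close> is a nonzero binomial of the toric ideal, the integer table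
  \<open>u - v\<close> has vanishing facet marginals, hence vanishing marginals on all faces, in particular
  on all sets of fewer than \<open>k\<close> coordinates. Such a nonzero table has \<open>\<ell>\<^sub>1\<close>-norm at least
  \<open>2\<^bsup>k\<^esup>\<close> (induction on the number of coordinates), and its total is zero, so
  \<open>deg u = deg v \<ge> 2\<^bsup>k-1\<^esup>\<close>. Conversely, encode the subsets \<open>T \<subseteq> \<sigma>\<close> as cells; the
  products over the even and over the odd subsets have equal facet marginals, because every
  facet misses some \<open>j \<in> \<sigma>\<close> and toggling \<open>j\<close> exchanges the two families. This binomial
  has degree \<open>2\<^bsup>k-1\<^esup>\<close>.\<close>

lemma monom_deg_eq_sum:
  assumes "finite A" "Poly_Mapping.keys m \<subseteq> A"
  shows "monom_deg m = sum (Poly_Mapping.lookup m) A"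
  unfolding monom_deg_def
  by (rule sum.mono_neutral_left) (use assms in \<open>auto simp: in_keys_iff\<close>)

lemma monom_deg_add: "monom_deg (a + b) = monom_deg a + monom_deg b"
proof -
  let ?A = "Poly_Mapping.keys a \<union> Poly_Mapping.keys b"
  have "monom_deg (a + b) = sum (Poly_Mapping.lookup (a + b)) ?A"
    by (rule monom_deg_eq_sum) (use keys_add[of a b] in auto)
  also have "\<dots> = monom_deg a + monom_deg b"
    by (simp add: lookup_add sum.distrib monom_deg_eq_sum[of ?A])
  finally show ?thesis .
qed

lemma ideal_gen_monom_deg_ge:
  assumes "\<forall>g\<in>G. \<forall>m\<in>Poly_Mapping.keys g. k \<le> monom_deg m"
    and "f \<in> ideal_gen V G" and "m \<in> Poly_Mapping.keys f"
  shows "k \<le> monom_deg m"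
  using assms(2,3)
proof (induction arbitrary: m rule: ideal_gen.induct)
  case zero
  then show ?case by simp
next
  case (step g r f)
  from step.prems consider "m \<in> Poly_Mapping.keys f" | "m \<in> Poly_Mapping.keys (r * g)"
    using keys_add[of f "r * g"] by blast
  then show ?case
  proof cases
    case 1
    then show ?thesis by (rule step.IH)
  next
    case 2
    then obtain a b where "m = a + b" "b \<in> Poly_Mapping.keys g"
      using keys_mult by blast
    then show ?thesis using assms(1) step.hyps(1) by (fastforce simp: monom_deg_add)
  qed
qed

lemma ideal_gen_empty: "ideal_gen V {} = {0}"
proof -
  have "f = 0" if "f \<in> ideal_gen V {}" for f
    using that by induction auto
  then show ?thesis using ideal_gen.zero by blast
qed

lemma generator_in_ideal_gen:
  fixes g :: "('v, 'k::comm_ring_1) mpoly"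
  assumes "g \<in> G"
  shows "g \<in> ideal_gen V G"
  using ideal_gen.step[OF assms _ ideal_gen.zero, of 1] by (simp add: poly_ring_def)

lemma initial_degree_ideal_gen:
  fixes g :: "('v, 'k::comm_ring_1) mpoly"
  assumes "g \<in> G" "g \<noteq> 0" "homogeneous_of_deg g k"
    and "\<forall>g\<in>G. \<forall>m\<in>Poly_Mapping.keys g. k \<le> monom_deg m"
  shows "initial_degree (ideal_gen V G) = k"
  unfolding initial_degree_def
proof (rule Least_equality)
  show "\<exists>f\<in>ideal_gen V G. f \<noteq> 0 \<and> homogeneous_of_deg f k"
    using assms(1-3) generator_in_ideal_gen by blast
next
  fix k' assume "\<exists>f\<in>ideal_gen V G. f \<noteq> 0 \<and> homogeneous_of_deg f k'"
  then obtain f m where "f \<in> ideal_gen V G" "homogeneous_of_deg f k'" "m \<in> Poly_Mapping.keys f"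
    using keys_eq_empty by blast
  then show "k \<le> k'"
    using ideal_gen_monom_deg_ge[OF assms(4)] by (auto simp: homogeneous_of_deg_def)
qed

definition set_monom :: "'a set \<Rightarrow> 'a \<Rightarrow>\<^sub>0 nat" where
  "set_monom A = (\<Sum>i\<in>A. Poly_Mapping.single i 1)"

lemma lookup_set_monom:
  "finite A \<Longrightarrow> Poly_Mapping.lookup (set_monom A) x = (if x \<in> A then 1 else 0)"
  by (simp add: set_monom_def lookup_sum lookup_single when_def)

lemma keys_set_monom: "finite A \<Longrightarrow> Poly_Mapping.keys (set_monom A) = A"
  by (auto simp: in_keys_iff lookup_set_monom split: if_splits)

lemma monom_deg_set_monom: "finite A \<Longrightarrow> monom_deg (set_monom A) = card A"
  by (simp add: monom_deg_def keys_set_monom lookup_set_monom)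

definition marginal ::
    "'a set \<Rightarrow> ('a \<Rightarrow> 'b set) \<Rightarrow> (('a \<Rightarrow> 'b) \<Rightarrow> 'c::comm_monoid_add) \<Rightarrow> 'a set \<Rightarrow> ('a \<Rightarrow> 'b) \<Rightarrow> 'c" where
  "marginal I D w S t = (\<Sum>c\<in>{c\<in>PiE I D. restrict c S = t}. w c)"

lemma sum_PiE_insert:
  assumes "x \<notin> F"
  shows "(\<Sum>c\<in>PiE (insert x F) D. h c) = (\<Sum>y\<in>D x. \<Sum>c\<in>PiE F D. h (c(x := y)))"
proof -
  have "(\<Sum>c\<in>PiE (insert x F) D. h c) = (\<Sum>(y, c)\<in>D x \<times> PiE F D. h (c(x := y)))"
    unfolding PiE_insert_eq
    by (subst sum.reindex[OF inj_combinator[OF assms]]) (simp add: case_prod_unfold)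
  also have "\<dots> = (\<Sum>y\<in>D x. \<Sum>c\<in>PiE F D. h (c(x := y)))"
    by (rule sum.cartesian_product[symmetric])
  finally show ?thesis .
qed

lemma marginal_insert:
  assumes "x \<notin> F" "finite F" "\<forall>i\<in>insert x F. finite (D i)"
  shows "marginal (insert x F) D w S t
    = (\<Sum>y\<in>D x. \<Sum>c\<in>PiE F D. if restrict (c(x := y)) S = t then w (c(x := y)) else 0)"
proof -
  have "finite (PiE (insert x F) D)"
    using assms by (intro finite_PiE) auto
  then show ?thesis
    unfolding marginal_def by (simp add: sum.inter_filter sum_PiE_insert[OF assms(1)])
qed

lemma restrict_fun_upd_eq_iff:
  assumes "x \<notin> S" "t \<in> extensional S"
  shows "restrict (c(x := y')) (insert x S) = t(x := y) \<longleftrightarrow> y' = y \<and> restrict c S = t"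
  using assms by (auto simp: fun_eq_iff restrict_def extensional_def)

lemma marginal_insert_fixed:
  assumes "x \<notin> F" "finite F" "\<forall>i\<in>insert x F. finite (D i)"
    and "S \<subseteq> F" "y \<in> D x" "t \<in> PiE S D"
  shows "marginal (insert x F) D w (insert x S) (t(x := y)) = marginal F D (\<lambda>c. w (c(x := y))) S t"
proof -
  have "x \<notin> S" "t \<in> extensional S" using assms by (auto simp: PiE_def)
  have if_conj_split: "(if P \<and> Q then a else 0) = (if P then if Q then a else 0 else 0)" for P Q and a :: 'c
    by simp
  have "finite (PiE F D)" "finite (D x)"
    using assms by (auto intro: finite_PiE)
  then show ?thesis
    unfolding marginal_insert[OF assms(1-3)] using assms(5)
    by (subst sum.swap)
      (simp add: restrict_fun_upd_eq_iff[OF \<open>x \<notin> S\<close> \<open>t \<in> extensional S\<close>] marginal_def sum.inter_filter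
        if_conj_split sum.delta' cong: if_cong)
qed

lemma marginal_insert_summed:
  assumes "x \<notin> F" "finite F" "\<forall>i\<in>insert x F. finite (D i)" "x \<notin> S"
  shows "marginal (insert x F) D w S t = marginal F D (\<lambda>c. \<Sum>y\<in>D x. w (c(x := y))) S t"
proof -
  have restr: "restrict (c(x := y)) S = restrict c S" for c y
    using assms(4) by (auto simp: restrict_def)
  have "finite (PiE F D)"
    using assms by (auto intro: finite_PiE)
  then have "marginal F D (\<lambda>c. \<Sum>y\<in>D x. w (c(x := y))) S t
      = (\<Sum>c\<in>PiE F D. if restrict c S = t then \<Sum>y\<in>D x. w (c(x := y)) else 0)"
    unfolding marginal_def by (rule sum.inter_filter)
  then show ?thesis
    unfolding marginal_insert[OF assms(1-3)] restr
    by (subst sum.swap) (auto intro: sum.cong)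
qed

definition vanishing_marginals ::
    "'a set \<Rightarrow> ('a \<Rightarrow> 'b set) \<Rightarrow> (('a \<Rightarrow> 'b) \<Rightarrow> 'c::comm_monoid_add) \<Rightarrow> nat \<Rightarrow> bool" where
  "vanishing_marginals I D w k \<longleftrightarrow>
     (\<forall>S t. S \<subseteq> I \<longrightarrow> card S < k \<longrightarrow> t \<in> PiE S D \<longrightarrow> marginal I D w S t = 0)"

lemma vanishing_marginals_slice:
  assumes "x \<notin> F" "finite F" "\<forall>i\<in>insert x F. finite (D i)"
    and "vanishing_marginals (insert x F) D w (Suc k)" "y \<in> D x"
  shows "vanishing_marginals F D (\<lambda>c. w (c(x := y))) k"
  unfolding vanishing_marginals_def
proof (intro allI impI)
  fix S t assume S: "S \<subseteq> F" "card S < k" and t: "t \<in> PiE S D"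
  have "finite S"
    using S(1) assms(2) by (rule finite_subset)
  moreover have "x \<notin> S"
    using S(1) assms(1) by blast
  ultimately have "marginal (insert x F) D w (insert x S) (t(x := y)) = 0"
    using assms(4)[unfolded vanishing_marginals_def, rule_format, of "insert x S" "t(x := y)"]
      S PiE_fun_upd[OF assms(5) t] by auto
  then show "marginal F D (\<lambda>c. w (c(x := y))) S t = 0"
    unfolding marginal_insert_fixed[OF assms(1-3) S(1) assms(5) t] .
qed

lemma vanishing_marginals_sum_slices:
  assumes "x \<notin> F" "finite F" "\<forall>i\<in>insert x F. finite (D i)"
    and "vanishing_marginals (insert x F) D w k"
  shows "vanishing_marginals F D (\<lambda>c. \<Sum>y\<in>D x. w (c(x := y))) k"
  unfolding vanishing_marginals_def
proof (intro allI impI)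
  fix S t assume S: "S \<subseteq> F" "card S < k" and "t \<in> PiE S D"
  then have "marginal (insert x F) D w S t = 0"
    using assms(4) by (auto simp: vanishing_marginals_def)
  moreover have "x \<notin> S"
    using S(1) assms(1) by blast
  ultimately show "marginal F D (\<lambda>c. \<Sum>y\<in>D x. w (c(x := y))) S t = 0"
    by (simp add: marginal_insert_summed[OF assms(1-3)])
qed

lemma one_le_sum_abs:
  fixes w :: "'a \<Rightarrow> int"
  assumes "finite A" "c0 \<in> A" "w c0 \<noteq> 0"
  shows "1 \<le> (\<Sum>c\<in>A. \<bar>w c\<bar>)"
proof -
  have "\<bar>w c0\<bar> \<le> (\<Sum>c\<in>A. \<bar>w c\<bar>)"
    using assms(1,2) by (intro member_le_sum) auto
  then show ?thesis using assms(3) by simp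
qed

lemma sum_abs_slices_le:
  fixes w :: "('a \<Rightarrow> 'b) \<Rightarrow> int"
  assumes "x \<notin> F" "finite (D x)" "Y \<subseteq> D x"
  shows "(\<Sum>y\<in>Y. \<Sum>c\<in>PiE F D. \<bar>w (c(x := y))\<bar>) \<le> (\<Sum>c\<in>PiE (insert x F) D. \<bar>w c\<bar>)"
  unfolding sum_PiE_insert[OF assms(1)] using assms(2,3) by (intro sum_mono2) (auto intro: sum_nonneg)

text \<open>Slice along the new coordinate \<open>x\<close>. Either two slices are nonzero, each with vanishing
  marginals of order \<open>< k\<close>, or only the slice through \<open>c0\<close> is, and then it equals the sum of
  all slices, whose marginals of order \<open>< k + 1\<close> vanish.\<close>
lemma two_pow_le_sum_abs_insert:
  fixes w :: "('a \<Rightarrow> 'b) \<Rightarrow> int"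
  assumes "x \<notin> F" "finite F" "\<forall>i\<in>insert x F. finite (D i)"
    and IH: "\<And>v j c. vanishing_marginals F D (v :: ('a \<Rightarrow> 'b) \<Rightarrow> int) j \<Longrightarrow> c \<in> PiE F D
      \<Longrightarrow> v c \<noteq> 0 \<Longrightarrow> 2 ^ j \<le> (\<Sum>c\<in>PiE F D. \<bar>v c\<bar>)"
    and "vanishing_marginals (insert x F) D w (Suc k)" "c0 \<in> PiE (insert x F) D" "w c0 \<noteq> 0"
  shows "2 ^ Suc k \<le> (\<Sum>c\<in>PiE (insert x F) D. \<bar>w c\<bar>)"
proof -
  define ws where "ws y c = w (c(x := y))" for y c
  define y0 c0' where "y0 = c0 x" and "c0' = c0(x := undefined)"
  have finDx: "finite (D x)"
    using assms(3) by simp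
  have y0: "y0 \<in> D x" and c0': "c0' \<in> PiE F D" and ws0: "ws y0 c0' \<noteq> 0"
    using assms(1,6,7) by (auto simp: y0_def c0'_def ws_def intro: PiE_mem fun_upd_in_PiE)
  have slices_le: "(\<Sum>y\<in>Y. \<Sum>c\<in>PiE F D. \<bar>ws y c\<bar>) \<le> (\<Sum>c\<in>PiE (insert x F) D. \<bar>w c\<bar>)"
    if "Y \<subseteq> D x" for Y
    unfolding ws_def using assms(1) finDx that by (rule sum_abs_slices_le)
  show ?thesis
  proof (cases "\<exists>y1\<in>D x - {y0}. \<exists>c1\<in>PiE F D. ws y1 c1 \<noteq> 0")
    case True
    then obtain y1 c1 where y1: "y1 \<in> D x" "y1 \<noteq> y0" and c1: "c1 \<in> PiE F D" "ws y1 c1 \<noteq> 0"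
      by blast
    have bound: "2 ^ k \<le> (\<Sum>c\<in>PiE F D. \<bar>ws y c\<bar>)" if "y \<in> D x" "c \<in> PiE F D" "ws y c \<noteq> 0" for y c
      using IH[of "ws y" k c] vanishing_marginals_slice[OF assms(1-3,5) that(1)] that(2,3)
      unfolding ws_def by blast
    have "2 ^ Suc k \<le> (\<Sum>y\<in>{y0, y1}. \<Sum>c\<in>PiE F D. \<bar>ws y c\<bar>)"
      using bound[OF y0 c0' ws0] bound[OF y1(1) c1] y1(2) by simp
    then show ?thesis
      using slices_le[of "{y0, y1}"] y0 y1 by simp
  next
    case False
    define W where "W c = (\<Sum>y\<in>D x. ws y c)" for c
    have W: "W c = ws y0 c" if "c \<in> PiE F D" for c
    proof -
      have "(\<Sum>y\<in>D x - {y0}. ws y c) = 0"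
        using False that by (intro sum.neutral) blast
      then show ?thesis
        unfolding W_def sum.remove[OF finDx y0] by simp
    qed
    have "vanishing_marginals F D W (Suc k)"
      unfolding W_def ws_def by (rule vanishing_marginals_sum_slices[OF assms(1-3,5)])
    moreover have "W c0' \<noteq> 0"
      using W[OF c0'] ws0 by simp
    ultimately have "2 ^ Suc k \<le> (\<Sum>c\<in>PiE F D. \<bar>W c\<bar>)"
      using IH c0' by blast
    also have "\<dots> = (\<Sum>y\<in>{y0}. \<Sum>c\<in>PiE F D. \<bar>ws y c\<bar>)"
      using W by simp
    finally show ?thesis
      using slices_le[of "{y0}"] y0 by simp
  qed
qed

lemma two_pow_le_sum_abs_if_vanishing_marginals:
  fixes w :: "('a \<Rightarrow> 'b) \<Rightarrow> int"
  assumes "finite I" "\<forall>i\<in>I. finite (D i)" "vanishing_marginals I D w k"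
    and "c0 \<in> PiE I D" "w c0 \<noteq> 0"
  shows "2 ^ k \<le> (\<Sum>c\<in>PiE I D. \<bar>w c\<bar>)"
  using assms
proof (induction I arbitrary: k w c0 rule: finite_induct)
  case empty
  then have "{c \<in> PiE {} D. restrict c {} = c0} = {c0}"
    by (auto simp: restrict_def)
  then have "marginal {} D w {} c0 = w c0"
    by (simp add: marginal_def)
  then have "k = 0"
    using empty.prems by (cases k) (auto simp: vanishing_marginals_def)
  moreover have "1 \<le> (\<Sum>c\<in>PiE {} D. \<bar>w c\<bar>)"
    using one_le_sum_abs[of "PiE {} D" c0 w] empty.prems(3,4) by simp
  ultimately show ?case
    by simp
next
  case (insert x F)
  show ?case
  proof (cases k)
    case 0
    have "finite (PiE (insert x F) D)"
      using insert.hyps(1) insert.prems(1) by (intro finite_PiE) auto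
    then show ?thesis
      using 0 one_le_sum_abs[of "PiE (insert x F) D" c0 w] insert.prems(3,4) by simp
  next
    case (Suc k')
    then show ?thesis
      using two_pow_le_sum_abs_insert[OF insert.hyps(2,1) insert.prems(1) insert.IH] insert.prems by simp
  qed
qed

lemma model_row_eq_marginal:
  "model_row n d F a u = marginal {1..n} (\<lambda>i. {1..d i}) (Poly_Mapping.lookup u) F a"
  by (simp add: model_row_def marginal_def cells_def)

lemma marginal_eq_sum_marginals_superset:
  assumes "finite I" "\<forall>i\<in>I. finite (D i)" "S \<subseteq> F" "F \<subseteq> I"
  shows "marginal I D w S t = (\<Sum>\<alpha>\<in>{\<alpha>\<in>PiE F D. restrict \<alpha> S = t}. marginal I D w F \<alpha>)"
proof -
  let ?C = "{c\<in>PiE I D. restrict c S = t}" and ?A = "{\<alpha>\<in>PiE F D. restrict \<alpha> S = t}"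
  have restr: "restrict (restrict c F) S = restrict c S" for c :: "'a \<Rightarrow> 'b"
    using assms(3) by (auto simp: restrict_def fun_eq_iff)
  have "finite F"
    using assms(1,4) by (rule finite_subset[rotated])
  then have "finite (PiE I D)" "finite (PiE F D)"
    using assms(1,2,4) by (simp_all add: finite_PiE subset_iff)
  moreover have "(\<lambda>c. restrict c F) ` ?C \<subseteq> ?A"
    using assms(4) restr by (fastforce simp: PiE_iff)
  ultimately have "marginal I D w S t = (\<Sum>\<alpha>\<in>?A. \<Sum>c\<in>{c\<in>?C. restrict c F = \<alpha>}. w c)"
    unfolding marginal_def by (intro sum.group[symmetric]) simp_all
  also have "\<dots> = (\<Sum>\<alpha>\<in>?A. marginal I D w F \<alpha>)"
  proof (intro sum.cong refl)
    fix \<alpha> assume "\<alpha> \<in> ?A"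
    then have "restrict c F = \<alpha> \<Longrightarrow> restrict c S = t" for c
      using restr[of c] by simp
    then have "{c\<in>?C. restrict c F = \<alpha>} = {c\<in>PiE I D. restrict c F = \<alpha>}"
      by blast
    then show "(\<Sum>c\<in>{c\<in>?C. restrict c F = \<alpha>}. w c) = marginal I D w F \<alpha>"
      by (simp add: marginal_def)
  qed
  finally show ?thesis .
qed

lemma face_subset_ground: "simplicial_complex n \<Delta> \<Longrightarrow> \<sigma> \<in> \<Delta> \<Longrightarrow> \<sigma> \<subseteq> {1..n}"
  by (simp add: simplicial_complex_def)

lemma facet_is_face: "F \<in> facets \<Delta> \<Longrightarrow> F \<in> \<Delta>"
  by (simp add: facets_def)

lemma face_subset_closed: "simplicial_complex n \<Delta> \<Longrightarrow> F \<in> \<Delta> \<Longrightarrow> \<sigma> \<subseteq> F \<Longrightarrow> \<sigma> \<in> \<Delta>"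
  unfolding simplicial_complex_def by blast

lemma empty_face:
  assumes "simplicial_complex n \<Delta>"
  shows "{} \<in> \<Delta>"
proof -
  obtain F where "F \<in> \<Delta>"
    using assms unfolding simplicial_complex_def by (elim conjE) blast
  then show ?thesis
    using face_subset_closed[OF assms] by blast
qed

lemma face_subset_facet:
  assumes "simplicial_complex n \<Delta>" "S \<in> \<Delta>"
  shows "\<exists>F\<in>facets \<Delta>. S \<subseteq> F"
proof -
  have "\<Delta> \<subseteq> Pow {1..n}"
    using face_subset_ground[OF assms(1)] by blast
  then have "finite \<Delta>"
    by (rule finite_subset) simp
  then obtain F where "F \<in> \<Delta>" "S \<subseteq> F" "\<forall>G\<in>\<Delta>. F \<subseteq> G \<longrightarrow> F = G"
    using finite_has_maximal2[OF _ assms(2)] by blast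
  then show ?thesis
    unfolding facets_def by blast
qed

lemma marginal_diff_eq_zero_on_face:
  assumes "simplicial_complex n \<Delta>" "same_margins n d \<Delta> a b" "S \<in> \<Delta>"
  shows "marginal {1..n} (\<lambda>i. {1..d i})
    (\<lambda>c. int (Poly_Mapping.lookup a c) - int (Poly_Mapping.lookup b c)) S t = 0"
    (is "marginal ?I ?D ?w S t = 0")
proof -
  obtain F where F: "F \<in> facets \<Delta>" "S \<subseteq> F"
    using face_subset_facet[OF assms(1,3)] by blast
  have "F \<subseteq> {1..n}"
    using face_subset_ground[OF assms(1) facet_is_face[OF F(1)]] .
  then have "marginal ?I ?D ?w S t = (\<Sum>\<alpha>\<in>{\<alpha>\<in>PiE F ?D. restrict \<alpha> S = t}. marginal ?I ?D ?w F \<alpha>)"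
    using F(2) by (intro marginal_eq_sum_marginals_superset) auto
  also have "\<dots> = 0"
  proof (intro sum.neutral ballI)
    fix \<alpha> assume "\<alpha> \<in> {\<alpha>\<in>PiE F ?D. restrict \<alpha> S = t}"
    then have "model_row n d F \<alpha> a = model_row n d F \<alpha> b"
      using assms(2) F(1) by (simp add: same_margins_def)
    then show "marginal ?I ?D ?w F \<alpha> = 0"
      unfolding model_row_eq_marginal marginal_def by (simp add: sum_subtractf flip: of_nat_sum)
  qed
  finally show ?thesis .
qed

lemma monom_deg_eq_if_same_margins:
  assumes "simplicial_complex n \<Delta>" "same_margins n d \<Delta> a b"
    and "Poly_Mapping.keys a \<subseteq> cells n d" "Poly_Mapping.keys b \<subseteq> cells n d"
  shows "monom_deg a = monom_deg b"
proof -
  have fin: "finite (cells n d)"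
    by (simp add: cells_def finite_PiE)
  have "marginal {1..n} (\<lambda>i. {1..d i})
      (\<lambda>c. int (Poly_Mapping.lookup a c) - int (Poly_Mapping.lookup b c)) {} (\<lambda>_. undefined) = 0"
    by (rule marginal_diff_eq_zero_on_face[OF assms(1,2) empty_face[OF assms(1)]])
  then have "(\<Sum>c\<in>cells n d. int (Poly_Mapping.lookup a c) - int (Poly_Mapping.lookup b c)) = 0"
    by (simp add: marginal_def restrict_def cells_def)
  then show ?thesis
    by (simp add: sum_subtractf monom_deg_eq_sum[OF fin assms(3)] monom_deg_eq_sum[OF fin assms(4)]
        flip: of_nat_sum)
qed

lemma binomial_degree_lower_bound:
  assumes "simplicial_complex n \<Delta>"
    and faces: "\<And>S. S \<subseteq> {1..n} \<Longrightarrow> card S < s \<Longrightarrow> S \<in> \<Delta>" and "0 < s"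
    and "Poly_Mapping.keys a \<subseteq> cells n d" "Poly_Mapping.keys b \<subseteq> cells n d"
    and "same_margins n d \<Delta> a b" "a \<noteq> b"
  shows "2 ^ (s - 1) \<le> monom_deg a"
proof -
  let ?D = "\<lambda>i. {1..d i}"
  define w where "w c = int (Poly_Mapping.lookup a c) - int (Poly_Mapping.lookup b c)" for c
  have cells: "cells n d = PiE {1..n} ?D" and fin: "finite (cells n d)"
    by (simp_all add: cells_def finite_PiE)
  have "vanishing_marginals {1..n} ?D w s"
    unfolding vanishing_marginals_def w_def
    using marginal_diff_eq_zero_on_face[OF assms(1,6) faces] by blast
  moreover obtain c0 where "Poly_Mapping.lookup a c0 \<noteq> Poly_Mapping.lookup b c0"
    using assms(7) poly_mapping_eqI by metis
  then have "c0 \<in> Poly_Mapping.keys a \<union> Poly_Mapping.keys b" "w c0 \<noteq> 0"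
    by (auto simp: w_def in_keys_iff)
  then have "c0 \<in> PiE {1..n} ?D" "w c0 \<noteq> 0"
    using assms(4,5) cells by blast+
  ultimately have "2 ^ s \<le> (\<Sum>c\<in>cells n d. \<bar>w c\<bar>)"
    unfolding cells by (intro two_pow_le_sum_abs_if_vanishing_marginals) simp_all
  also have "\<dots> \<le> (\<Sum>c\<in>cells n d. int (Poly_Mapping.lookup a c) + int (Poly_Mapping.lookup b c))"
    by (intro sum_mono) (simp add: w_def)
  also have "\<dots> = int (monom_deg a) + int (monom_deg b)"
    by (simp add: monom_deg_eq_sum[OF fin assms(4)] monom_deg_eq_sum[OF fin assms(5)] sum.distrib)
  also have "\<dots> = 2 * int (monom_deg a)"
    using monom_deg_eq_if_same_margins[OF assms(1,6,4,5)] by simp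
  finally have "2 * 2 ^ (s - 1) \<le> 2 * int (monom_deg a)"
    using \<open>0 < s\<close> by (simp add: power_eq_if)
  then show ?thesis by simp
qed

definition toggle :: "'a \<Rightarrow> 'a set \<Rightarrow> 'a set" where
  "toggle j T = (if j \<in> T then T - {j} else insert j T)"

lemma toggle_toggle [simp]: "toggle j (toggle j T) = T"
  by (auto simp: toggle_def)

lemma toggle_subset: "j \<in> \<sigma> \<Longrightarrow> T \<subseteq> \<sigma> \<Longrightarrow> toggle j T \<subseteq> \<sigma>"
  by (auto simp: toggle_def)

lemma even_card_toggle:
  assumes "finite T"
  shows "even (card (toggle j T)) \<longleftrightarrow> odd (card T)"
proof (cases "j \<in> T")
  case True
  then have "card T = Suc (card (T - {j}))"
    using assms by (intro card.remove)
  then show ?thesis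
    using True by (simp add: toggle_def)
next
  case False
  then show ?thesis using assms by (simp add: toggle_def)
qed

lemma card_even_subsets_eq_card_odd_subsets:
  assumes "finite \<sigma>" "j \<in> \<sigma>" and P: "\<And>T. T \<subseteq> \<sigma> \<Longrightarrow> P (toggle j T) = P T"
  shows "card {T. T \<subseteq> \<sigma> \<and> even (card T) \<and> P T} = card {T. T \<subseteq> \<sigma> \<and> odd (card T) \<and> P T}"
proof (rule bij_betw_same_card[of "toggle j"], rule bij_betw_byWitness[where f' = "toggle j"])
  have toggle: "toggle j T \<subseteq> \<sigma> \<and> (even (card (toggle j T)) \<longleftrightarrow> odd (card T)) \<and> P (toggle j T) = P T"
    if "T \<subseteq> \<sigma>" for T
    using toggle_subset[OF assms(2) that] even_card_toggle[OF finite_subset[OF that assms(1)]] P[OF that]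
    by blast
  then show "toggle j ` {T. T \<subseteq> \<sigma> \<and> even (card T) \<and> P T} \<subseteq> {T. T \<subseteq> \<sigma> \<and> odd (card T) \<and> P T}"
    and "toggle j ` {T. T \<subseteq> \<sigma> \<and> odd (card T) \<and> P T} \<subseteq> {T. T \<subseteq> \<sigma> \<and> even (card T) \<and> P T}"
    by (auto dest: toggle)
qed simp_all

lemma card_subsets_of_parity:
  assumes "finite \<sigma>" "\<sigma> \<noteq> {}"
  shows "card {T. T \<subseteq> \<sigma> \<and> even (card T) = p} = 2 ^ (card \<sigma> - 1)"
proof -
  obtain j where "j \<in> \<sigma>" using assms(2) by blast
  let ?E = "{T. T \<subseteq> \<sigma> \<and> even (card T)}" and ?O = "{T. T \<subseteq> \<sigma> \<and> odd (card T)}"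
  have "card ?E = card ?O"
    using card_even_subsets_eq_card_odd_subsets[OF assms(1) \<open>j \<in> \<sigma>\<close>, of "\<lambda>_. True"] by simp
  moreover have "card ?E + card ?O = 2 ^ card \<sigma>"
  proof -
    have "?E \<union> ?O = Pow \<sigma>" "?E \<inter> ?O = {}" by auto
    moreover have "finite ?E" "finite ?O"
      using assms(1) by (auto intro: finite_subset[of _ "Pow \<sigma>"])
    ultimately show ?thesis
      using card_Un_disjoint[of ?E ?O] card_Pow[OF assms(1)] by simp
  qed
  moreover have "(2::nat) ^ card \<sigma> = 2 * 2 ^ (card \<sigma> - 1)"
    using assms by (simp add: power_eq_if)
  ultimately show ?thesis
    by (cases p) simp_all
qed

definition subset_cell :: "nat \<Rightarrow> nat set \<Rightarrow> nat \<Rightarrow> nat" where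
  "subset_cell n T = restrict (\<lambda>i. if i \<in> T then 2 else 1) {1..n}"

definition parity_monom :: "nat \<Rightarrow> nat set \<Rightarrow> bool \<Rightarrow> (nat \<Rightarrow> nat) \<Rightarrow>\<^sub>0 nat" where
  "parity_monom n \<sigma> p = set_monom (subset_cell n ` {T. T \<subseteq> \<sigma> \<and> even (card T) = p})"

lemma inj_on_subset_cell:
  assumes "\<sigma> \<subseteq> {1..n}"
  shows "inj_on (subset_cell n) (Pow \<sigma>)"
proof (rule inj_onI)
  fix A B assume AB: "A \<in> Pow \<sigma>" "B \<in> Pow \<sigma>" and eq: "subset_cell n A = subset_cell n B"
  show "A = B"
  proof (rule set_eqI)
    fix i
    show "i \<in> A \<longleftrightarrow> i \<in> B"
    proof (cases "i \<in> \<sigma>")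
      case True
      then have "i \<in> {1..n}" using assms by blast
      then have "(if i \<in> A then 2 else 1::nat) = (if i \<in> B then 2 else 1)"
        using fun_cong[OF eq, of i] by (simp add: subset_cell_def)
      then show ?thesis by (auto split: if_splits)
    next
      case False
      then show ?thesis using AB by blast
    qed
  qed
qed

lemma subset_cell_in_cells: "\<forall>i\<in>{1..n}. 2 \<le> d i \<Longrightarrow> subset_cell n T \<in> cells n d"
  by (force simp: subset_cell_def cells_def)

lemma finite_subsets_of_parity: "finite \<sigma> \<Longrightarrow> finite {T. T \<subseteq> \<sigma> \<and> even (card T) = p}"
  by (rule finite_subset[of _ "Pow \<sigma>"]) auto

lemma keys_parity_monom:
  assumes "\<sigma> \<subseteq> {1..n}"
  shows "Poly_Mapping.keys (parity_monom n \<sigma> p) = subset_cell n ` {T. T \<subseteq> \<sigma> \<and> even (card T) = p}"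
proof -
  have "finite \<sigma>" using assms finite_subset by blast
  then show ?thesis
    unfolding parity_monom_def by (intro keys_set_monom finite_imageI finite_subsets_of_parity)
qed

lemma monom_deg_parity_monom:
  assumes "\<sigma> \<subseteq> {1..n}" "\<sigma> \<noteq> {}"
  shows "monom_deg (parity_monom n \<sigma> p) = 2 ^ (card \<sigma> - 1)"
proof -
  have "finite \<sigma>" using assms(1) finite_subset by blast
  then have "finite {T. T \<subseteq> \<sigma> \<and> even (card T) = p}"
    by (rule finite_subsets_of_parity)
  moreover have "inj_on (subset_cell n) {T. T \<subseteq> \<sigma> \<and> even (card T) = p}"
    using inj_on_subset_cell[OF assms(1)] by (rule inj_on_subset) blast
  ultimately show ?thesis
    unfolding parity_monom_def
    by (simp add: monom_deg_set_monom card_image card_subsets_of_parity[OF \<open>finite \<sigma>\<close> assms(2)])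
qed

lemma parity_monom_even_neq_odd:
  assumes "\<sigma> \<subseteq> {1..n}"
  shows "parity_monom n \<sigma> True \<noteq> parity_monom n \<sigma> False"
proof
  assume "parity_monom n \<sigma> True = parity_monom n \<sigma> False"
  then have "subset_cell n {} \<in> subset_cell n ` {T. T \<subseteq> \<sigma> \<and> odd (card T)}"
    using keys_parity_monom[OF assms, of True] keys_parity_monom[OF assms, of False] by force
  then obtain T where "T \<subseteq> \<sigma>" "odd (card T)" "subset_cell n {} = subset_cell n T"
    by blast
  then show False
    using inj_onD[OF inj_on_subset_cell[OF assms], of "{}" T] by simp
qed

lemma model_row_set_monom:
  assumes "finite E" "E \<subseteq> cells n d"
  shows "model_row n d F \<alpha> (set_monom E) = card {c\<in>E. restrict c F = \<alpha>}"
proof -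
  have "finite (cells n d)"
    by (simp add: cells_def finite_PiE)
  then have "model_row n d F \<alpha> (set_monom E) = card {c\<in>{c\<in>cells n d. restrict c F = \<alpha>}. c \<in> E}"
    unfolding model_row_def lookup_set_monom[OF assms(1)] by (simp add: sum.inter_filter[symmetric])
  also have "{c\<in>{c\<in>cells n d. restrict c F = \<alpha>}. c \<in> E} = {c\<in>E. restrict c F = \<alpha>}"
    using assms(2) by blast
  finally show ?thesis .
qed

lemma model_row_parity_monom:
  assumes "\<sigma> \<subseteq> {1..n}" "\<forall>i\<in>{1..n}. 2 \<le> d i"
  shows "model_row n d F \<alpha> (parity_monom n \<sigma> p)
    = card {T. T \<subseteq> \<sigma> \<and> even (card T) = p \<and> restrict (subset_cell n T) F = \<alpha>}"
proof -
  let ?T = "{T. T \<subseteq> \<sigma> \<and> even (card T) = p}"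
  have "finite \<sigma>" using assms(1) finite_subset by blast
  then have "finite ?T"
    by (rule finite_subsets_of_parity)
  then have "model_row n d F \<alpha> (parity_monom n \<sigma> p) = card {c\<in>subset_cell n ` ?T. restrict c F = \<alpha>}"
    unfolding parity_monom_def using subset_cell_in_cells[OF assms(2)]
    by (intro model_row_set_monom) auto
  also have "{c\<in>subset_cell n ` ?T. restrict c F = \<alpha>} = subset_cell n ` {T\<in>?T. restrict (subset_cell n T) F = \<alpha>}"
    by blast
  also have "card \<dots> = card {T\<in>?T. restrict (subset_cell n T) F = \<alpha>}"
    using inj_on_subset_cell[OF assms(1)] by (intro card_image) (rule inj_on_subset, auto)
  finally show ?thesis by simp
qed

lemma same_margins_parity_monom:
  assumes "simplicial_complex n \<Delta>" "\<sigma> \<subseteq> {1..n}" "\<sigma> \<notin> \<Delta>" "\<forall>i\<in>{1..n}. 2 \<le> d i"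
  shows "same_margins n d \<Delta> (parity_monom n \<sigma> True) (parity_monom n \<sigma> False)"
  unfolding same_margins_def
proof (intro ballI)
  fix F \<alpha> assume "F \<in> facets \<Delta>"
  then obtain j where j: "j \<in> \<sigma>" "j \<notin> F"
    using face_subset_closed[OF assms(1) facet_is_face] assms(3) by blast
  have "finite \<sigma>" using assms(2) finite_subset by blast
  have "restrict (subset_cell n (toggle j T)) F = restrict (subset_cell n T) F" for T
    using j(2) by (auto simp: subset_cell_def toggle_def restrict_def fun_eq_iff)
  then have "card {T. T \<subseteq> \<sigma> \<and> even (card T) \<and> restrict (subset_cell n T) F = \<alpha>}
      = card {T. T \<subseteq> \<sigma> \<and> odd (card T) \<and> restrict (subset_cell n T) F = \<alpha>}"
    by (intro card_even_subsets_eq_card_odd_subsets[OF \<open>finite \<sigma>\<close> j(1)]) simp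
  then show "model_row n d F \<alpha> (parity_monom n \<sigma> True) = model_row n d F \<alpha> (parity_monom n \<sigma> False)"
    by (simp add: model_row_parity_monom[OF assms(2,4)])
qed

lemma same_margins_sym: "same_margins n d \<Delta> u v \<Longrightarrow> same_margins n d \<Delta> v u"
  by (simp add: same_margins_def)

lemma keys_binomial:
  "Poly_Mapping.keys (Poly_Mapping.single u (1::'k::comm_ring_1) - Poly_Mapping.single v 1) \<subseteq> {u, v}"
  using keys_diff[of "Poly_Mapping.single u (1::'k)" "Poly_Mapping.single v 1"] by auto

lemma binomial_neq_zero:
  assumes "u \<noteq> v"
  shows "Poly_Mapping.single u (1::'k::comm_ring_1) - Poly_Mapping.single v 1 \<noteq> 0"
proof
  assume "Poly_Mapping.single u (1::'k) - Poly_Mapping.single v 1 = 0"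
  then have "Poly_Mapping.lookup (Poly_Mapping.single u (1::'k) - Poly_Mapping.single v 1) u = 0"
    by simp
  then show False
    using assms by (simp add: lookup_minus lookup_single_not_eq)
qed

lemma initial_degree_sr_ideal:
  assumes "\<sigma> \<subseteq> {1..n}" "\<sigma> \<notin> \<Delta>" and min: "\<And>\<tau>. \<tau> \<subseteq> {1..n} \<Longrightarrow> \<tau> \<notin> \<Delta> \<Longrightarrow> card \<sigma> \<le> card \<tau>"
  shows "initial_degree (sr_ideal n \<Delta> :: (nat, 'k::comm_ring_1) mpoly set) = card \<sigma>"
proof -
  have fin: "finite \<tau>" if "\<tau> \<subseteq> {1..n}" for \<tau>
    using that finite_subset by blast
  have "sr_ideal n \<Delta> = ideal_gen {1..n}
      {Poly_Mapping.single (set_monom \<tau>) (1::'k) | \<tau>. \<tau> \<subseteq> {1..n} \<and> \<tau> \<notin> \<Delta>}"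
    by (simp add: sr_ideal_def set_monom_def)
  also have "initial_degree \<dots> = card \<sigma>"
  proof (rule initial_degree_ideal_gen)
    show "Poly_Mapping.single (set_monom \<sigma>) 1 \<in> {Poly_Mapping.single (set_monom \<tau>) (1::'k) | \<tau>. \<tau> \<subseteq> {1..n} \<and> \<tau> \<notin> \<Delta>}"
      using assms(1,2) by blast
    show "Poly_Mapping.single (set_monom \<sigma>) (1::'k) \<noteq> 0"
      by (metis keys_eq_empty keys_single one_neq_zero insert_not_empty)
    show "homogeneous_of_deg (Poly_Mapping.single (set_monom \<sigma>) (1::'k)) (card \<sigma>)"
      using fin[OF assms(1)] by (simp add: homogeneous_of_deg_def monom_deg_set_monom)
    show "\<forall>g\<in>{Poly_Mapping.single (set_monom \<tau>) (1::'k) | \<tau>. \<tau> \<subseteq> {1..n} \<and> \<tau> \<notin> \<Delta>}.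
        \<forall>m\<in>Poly_Mapping.keys g. card \<sigma> \<le> monom_deg m"
      using min fin by (auto simp: monom_deg_set_monom)
  qed
  finally show ?thesis .
qed

lemma binomial_keys_monom_deg_ge:
  fixes a b :: "(nat \<Rightarrow> nat) \<Rightarrow>\<^sub>0 nat"
  assumes "simplicial_complex n \<Delta>"
    and faces: "\<And>S. S \<subseteq> {1..n} \<Longrightarrow> card S < s \<Longrightarrow> S \<in> \<Delta>" and "0 < s"
    and ab: "Poly_Mapping.keys a \<subseteq> cells n d" "Poly_Mapping.keys b \<subseteq> cells n d" "same_margins n d \<Delta> a b"
    and m: "m \<in> Poly_Mapping.keys (Poly_Mapping.single a (1::'k::comm_ring_1) - Poly_Mapping.single b 1)"
  shows "2 ^ (s - 1) \<le> monom_deg m"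
proof -
  have "a \<noteq> b"
  proof
    assume "a = b"
    then show False using m by simp
  qed
  have "m \<in> {a, b}"
    using subsetD[OF keys_binomial m] .
  moreover have "2 ^ (s - 1) \<le> monom_deg a"
    by (rule binomial_degree_lower_bound[OF assms(1) faces \<open>0 < s\<close> ab \<open>a \<noteq> b\<close>])
  moreover have "2 ^ (s - 1) \<le> monom_deg b"
    by (rule binomial_degree_lower_bound[OF assms(1) faces \<open>0 < s\<close> ab(2,1)
          same_margins_sym[OF ab(3)] \<open>a \<noteq> b\<close>[symmetric]])
  ultimately show ?thesis
    by auto
qed

lemma initial_degree_hier_ideal:
  assumes "simplicial_complex n \<Delta>" "\<sigma> \<subseteq> {1..n}" "\<sigma> \<notin> \<Delta>"
    and min: "\<And>\<tau>. \<tau> \<subseteq> {1..n} \<Longrightarrow> \<tau> \<notin> \<Delta> \<Longrightarrow> card \<sigma> \<le> card \<tau>"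
    and "\<forall>i\<in>{1..n}. 2 \<le> d i"
  shows "initial_degree (hier_ideal n d \<Delta> :: (nat \<Rightarrow> nat, 'k::comm_ring_1) mpoly set) = 2 ^ (card \<sigma> - 1)"
proof -
  let ?G = "{Poly_Mapping.single u 1 - Poly_Mapping.single v (1::'k) | u v.
    Poly_Mapping.keys u \<subseteq> cells n d \<and> Poly_Mapping.keys v \<subseteq> cells n d \<and> same_margins n d \<Delta> u v}"
  let ?u = "parity_monom n \<sigma> True" and ?v = "parity_monom n \<sigma> False"
  have "\<sigma> \<noteq> {}"
    using empty_face[OF assms(1)] assms(3) by blast
  moreover have "finite \<sigma>"
    using assms(2) finite_subset by blast
  ultimately have "0 < card \<sigma>"
    by (simp add: card_gt_0_iff)
  have faces: "S \<in> \<Delta>" if "S \<subseteq> {1..n}" "card S < card \<sigma>" for S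
    using min[OF that(1)] that(2) by (meson not_le)
  have keys_uv: "Poly_Mapping.keys (parity_monom n \<sigma> p) \<subseteq> cells n d" for p
    unfolding keys_parity_monom[OF assms(2)] using subset_cell_in_cells[OF assms(5)] by blast
  have "initial_degree (ideal_gen (cells n d) ?G) = 2 ^ (card \<sigma> - 1)"
  proof (rule initial_degree_ideal_gen)
    show "Poly_Mapping.single ?u 1 - Poly_Mapping.single ?v 1 \<in> ?G"
      using keys_uv same_margins_parity_monom[OF assms(1-3,5)] by blast
    show "Poly_Mapping.single ?u 1 - Poly_Mapping.single ?v (1::'k) \<noteq> 0"
      by (rule binomial_neq_zero[OF parity_monom_even_neq_odd[OF assms(2)]])
    show "homogeneous_of_deg (Poly_Mapping.single ?u 1 - Poly_Mapping.single ?v (1::'k)) (2 ^ (card \<sigma> - 1))"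
      unfolding homogeneous_of_deg_def
    proof (intro ballI)
      fix m assume "m \<in> Poly_Mapping.keys (Poly_Mapping.single ?u 1 - Poly_Mapping.single ?v (1::'k))"
      then have "m = ?u \<or> m = ?v"
        using subsetD[OF keys_binomial] by simp
      then show "monom_deg m = 2 ^ (card \<sigma> - 1)"
        using monom_deg_parity_monom[OF assms(2) \<open>\<sigma> \<noteq> {}\<close>] by (elim disjE) simp_all
    qed
    show "\<forall>g\<in>?G. \<forall>m\<in>Poly_Mapping.keys g. 2 ^ (card \<sigma> - 1) \<le> monom_deg m"
      using binomial_keys_monom_deg_ge[OF assms(1) faces \<open>0 < card \<sigma>\<close>] by blast
  qed
  then show ?thesis
    by (simp add: hier_ideal_def)
qed

lemma ex_minimal_nonface:
  assumes "sr_ideal n \<Delta> \<noteq> {0 :: (nat, 'k::comm_ring_1) mpoly}"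
  obtains \<sigma> where "\<sigma> \<subseteq> {1..n}" "\<sigma> \<notin> \<Delta>" "\<And>\<tau>. \<tau> \<subseteq> {1..n} \<Longrightarrow> \<tau> \<notin> \<Delta> \<Longrightarrow> card \<sigma> \<le> card \<tau>"
proof -
  have "{\<tau>. \<tau> \<subseteq> {1..n} \<and> \<tau> \<notin> \<Delta>} \<noteq> {}"
  proof
    assume "{\<tau>. \<tau> \<subseteq> {1..n} \<and> \<tau> \<notin> \<Delta>} = {}"
    then have "sr_ideal n \<Delta> = ideal_gen {1..n} ({} :: (nat, 'k) mpoly set)"
      unfolding sr_ideal_def setcompr_eq_image by (simp only: image_empty)
    with assms show False
      by (simp only: ideal_gen_empty)
  qed
  then obtain \<tau> where "\<tau> \<subseteq> {1..n} \<and> \<tau> \<notin> \<Delta>"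
    by blast
  then show ?thesis
    using that ex_has_least_nat[of "\<lambda>\<tau>. \<tau> \<subseteq> {1..n} \<and> \<tau> \<notin> \<Delta>" \<tau> card] by blast
qed

theorem proposition4p2:
  fixes n :: nat and \<Delta> :: "nat set set" and d :: "nat \<Rightarrow> nat"
  assumes "simplicial_complex n \<Delta>"
    and "sr_ideal n \<Delta> \<noteq> {0 :: (nat, 'k::field) mpoly}"
    and "\<forall>i\<in>{1..n}. 2 \<le> d i"
  shows "initial_degree (hier_ideal n d \<Delta> :: (nat \<Rightarrow> nat, 'k) mpoly set)
           = 2 ^ (initial_degree (sr_ideal n \<Delta> :: (nat, 'k) mpoly set) - 1)"
proof -
  obtain \<sigma> where \<sigma>: "\<sigma> \<subseteq> {1..n}" "\<sigma> \<notin> \<Delta>"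
    and min: "\<And>\<tau>. \<tau> \<subseteq> {1..n} \<Longrightarrow> \<tau> \<notin> \<Delta> \<Longrightarrow> card \<sigma> \<le> card \<tau>"
    using ex_minimal_nonface[OF assms(2)] by blast
  show ?thesis
    using initial_degree_sr_ideal[where 'k = 'k, OF \<sigma> min]
      initial_degree_hier_ideal[where 'k = 'k, OF assms(1) \<sigma> min assms(3)]
    by simp
qed

end
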